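(* Let $\lambda_0>\lambda_1$ be countable nonzero additively indecomposable ordinals. Then $\lambda_0\le_{sH}\lambda_0+\lambda_1$ and $\lambda_1\le_{sH}\lambda_0+\lambda_1$.
   Context: Ordinals are identified with linear orders $(\eta,<)$; $\lambda_0+\lambda_1$ denotes ordinal addition. A copy of a countable structure is an isomorphic structure with domain $\omega$. Hyper-Medvedev reducibility: for countable structures, $\mathcal{A}\le_{sH}\mathcal{B}$ means there is a single (pair of) index(es) for a $\Delta^1_1$ definition relative to an oracle such that for every copy $B$ of $\mathcal{B}$, the set defined by this $\Delta^1_1(B)$ definition is (the atomic diagram of) a copy of $\mathcal{A}$; i.e. a copy of $\mathcal{A}$ is uniformly $\Delta^1_1$-definable in every copy of $\mathcal{B}$. An ordinal $\lambda>0$ is additively indecomposable if $\beta+\gamma<\lambda$ whenever $\beta,\gamma<\lambda$. *)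

theory Defs
  imports Main "HOL-Library.Nat_Bijection"
begin

datatype tm = V nat | Zero | Sc tm | Plus tm tm | Times tm tm

datatype fm =
    Eq tm tm | Less tm tm
  | Mem tm nat          \<comment> \<open>t belongs to set variable k (de Bruijn)\<close>
  | Orc tm
  | Neg fm | Conj fm fm | Disj fm fm
  | ExN fm | AllN fm
  | ExS fm | AllS fm

definition scons :: "'a \<Rightarrow> (nat \<Rightarrow> 'a) \<Rightarrow> nat \<Rightarrow> 'a" where
  "scons x e = (\<lambda>i. case i of 0 \<Rightarrow> x | Suc k \<Rightarrow> e k)"

fun evl :: "(nat \<Rightarrow> nat) \<Rightarrow> tm \<Rightarrow> nat" where
  "evl e (V i) = e i"
| "evl e Zero = 0"
| "evl e (Sc t) = Suc (evl e t)"
| "evl e (Plus s t) = evl e s + evl e t"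
| "evl e (Times s t) = evl e s * evl e t"

fun sat :: "nat set \<Rightarrow> (nat \<Rightarrow> nat) \<Rightarrow> (nat \<Rightarrow> nat set) \<Rightarrow> fm \<Rightarrow> bool" where
  "sat B e E (Eq s t) = (evl e s = evl e t)"
| "sat B e E (Less s t) = (evl e s < evl e t)"
| "sat B e E (Mem t k) = (evl e t \<in> E k)"
| "sat B e E (Orc t) = (evl e t \<in> B)"
| "sat B e E (Neg p) = (\<not> sat B e E p)"
| "sat B e E (Conj p q) = (sat B e E p \<and> sat B e E q)"
| "sat B e E (Disj p q) = (sat B e E p \<or> sat B e E q)"
| "sat B e E (ExN p) = (\<exists>m. sat B (scons m e) E p)"
| "sat B e E (AllN p) = (\<forall>m. sat B (scons m e) E p)"
| "sat B e E (ExS p) = (\<exists>X. sat B e (scons X E) p)"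
| "sat B e E (AllS p) = (\<forall>X. sat B e (scons X E) p)"

fun arith :: "fm \<Rightarrow> bool" where
  "arith (Neg p) = arith p"
| "arith (Conj p q) = (arith p \<and> arith q)"
| "arith (Disj p q) = (arith p \<and> arith q)"
| "arith (ExN p) = arith p"
| "arith (AllN p) = arith p"
| "arith (ExS p) = False"
| "arith (AllS p) = False"
| "arith _ = True"

definition sigma11 :: "fm \<Rightarrow> bool" where
  "sigma11 p \<longleftrightarrow> (\<exists>q. p = ExS q \<and> arith q)"

definition pi11 :: "fm \<Rightarrow> bool" where
  "pi11 p \<longleftrightarrow> (\<exists>q. p = AllS q \<and> arith q)"

definition dset :: "nat set \<Rightarrow> fm \<Rightarrow> nat set" where
  "dset B p = {n. sat B (scons n (\<lambda>_. 0)) (\<lambda>_. {}) p}"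

text \<open>A linear order is given by its reflexive order relation (as Well_order in Main).\<close>

definition iso_rel :: "('a \<times> 'a) set \<Rightarrow> ('b \<times> 'b) set \<Rightarrow> bool" where
  "iso_rel S r \<longleftrightarrow> (\<exists>f. bij_betw f (Field S) (Field r) \<and>
     (\<forall>i\<in>Field S. \<forall>j\<in>Field S. (i, j) \<in> S \<longleftrightarrow> (f i, f j) \<in> r))"

definition copy_of :: "(nat \<times> nat) set \<Rightarrow> ('a \<times> 'a) set \<Rightarrow> bool" where
  "copy_of S r \<longleftrightarrow> (Field S = UNIV \<or> (\<exists>n. Field S = {..<n})) \<and> iso_rel S r"

definition diag :: "(nat \<times> nat) set \<Rightarrow> nat set" where
  "diag S = prod_encode ` S"

definition sH_le :: "('a \<times> 'a) set \<Rightarrow> ('b \<times> 'b) set \<Rightarrow> bool" where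
  "sH_le A B \<longleftrightarrow> (\<exists>p q. sigma11 p \<and> pi11 q \<and>
     (\<forall>S. copy_of S B \<longrightarrow>
        dset (diag S) p = dset (diag S) q \<and>
        copy_of (prod_decode ` dset (diag S) p) A))"

definition osum :: "('a \<times> 'a) set \<Rightarrow> ('b \<times> 'b) set \<Rightarrow> (('a + 'b) \<times> ('a + 'b)) set" where
  "osum r s = {(Inl a, Inl b) | a b. (a, b) \<in> r} \<union> {(Inr a, Inr b) | a b. (a, b) \<in> s}
     \<union> {(Inl a, Inr b) | a b. a \<in> Field r \<and> b \<in> Field s}"

text \<open>Countable ordinals are represented by well-orders on (subsets of) nat.\<close>
definition add_indecomp :: "(nat \<times> nat) set \<Rightarrow> bool" where
  "add_indecomp l \<longleftrightarrow> Well_order l \<and> l \<noteq> {} \<and>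
     (\<forall>b g :: (nat \<times> nat) set. Well_order b \<longrightarrow> Well_order g \<longrightarrow>
        (b, l) \<in> ordLess \<longrightarrow> (g, l) \<in> ordLess \<longrightarrow> (osum b g :: ((nat + nat) \<times> (nat + nat)) set, l) \<in> ordLess)"

end

theory Submission
  imports Defs "HOL-Library.Infinite_Set"
begin

(* A copy S of \<lambda>\<^sub>0 + \<lambda>\<^sub>1 splits into its \<lambda>\<^sub>0-part A and its \<lambda>\<^sub>1-part B, and both parts are
   \<Sigma>\<^sup>1\<^sub>1 in S. Since \<lambda>\<^sub>0 is additively indecomposable, the strict initial segment below an element
   of A is shorter than its final segment, whereas for an element of B the final segment lies in
   B and is shorter than \<lambda>\<^sub>0, hence than the initial segment, which contains A. Comparisons of
   well-orders are witnessed by strictly increasing maps, so one existentially quantified set can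
   code A together with these maps, and every such witness codes exactly A. Since
   \<lambda>\<^sub>1 + \<lambda>\<^sub>0 = \<lambda>\<^sub>0, moving B in front of A gives a copy of \<lambda>\<^sub>0; listing B in increasing
   order of the natural numbers gives a copy of \<lambda>\<^sub>1 (a finite \<lambda>\<^sub>1 has a fixed copy). As the
   defined relation does not depend on the witness, the \<Sigma>\<^sup>1\<^sub>1 definition agrees with its \<Pi>\<^sup>1\<^sub>1 dual
   "for every witness". *)

unbundle cardinal_syntax

section \<open>Well-orders and strictly increasing maps\<close>

lemma Well_order_refl_iff: "Well_order r \<Longrightarrow> (x, x) \<in> r \<longleftrightarrow> x \<in> Field r"
  using wo_rel.REFL[unfolded wo_rel_def] by (auto simp: refl_on_def intro: FieldI1)

lemma above_Field: "above r a \<subseteq> Field r"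
  by (auto simp: above_def Field_def)

lemma Field_Restr_Well_order: "Well_order r \<Longrightarrow> Field (Restr r X) = Field r \<inter> X"
  by (simp add: Refl_Field_Restr wo_rel.REFL wo_rel_def)

definition strict_mono_rel :: "'a rel \<Rightarrow> 'b rel \<Rightarrow> ('a \<Rightarrow> 'b) \<Rightarrow> bool" where
  "strict_mono_rel r r' f \<longleftrightarrow>
     (\<forall>a\<in>Field r. f a \<in> Field r') \<and> (\<forall>a b. (a, b) \<in> r - Id \<longrightarrow> (f a, f b) \<in> r' - Id)"

lemma strict_mono_rel_comp:
  "strict_mono_rel r r' f \<Longrightarrow> strict_mono_rel r' r'' g \<Longrightarrow> strict_mono_rel r r'' (g \<circ> f)"
  unfolding strict_mono_rel_def by auto

lemma strict_mono_rel_id: "r \<subseteq> r' \<Longrightarrow> strict_mono_rel r r' id"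
  unfolding strict_mono_rel_def Field_def by auto

lemma iso_imp_strict_mono_rel: "iso r r' f \<Longrightarrow> strict_mono_rel r r' f"
  unfolding strict_mono_rel_def iso_iff2 bij_betw_def inj_on_def
  by (auto; meson FieldI1 FieldI2)

lemma strict_mono_rel_inflationary:
  assumes r: "Well_order r" and f: "strict_mono_rel r r f"
  shows "a \<in> Field r \<Longrightarrow> (a, f a) \<in> r"
proof (induction a rule: wf_induct_rule[OF wo_rel.WF[unfolded wo_rel_def, OF r]])
  case (1 a)
  show ?case
  proof (rule ccontr)
    assume "(a, f a) \<notin> r"
    moreover have fa: "f a \<in> Field r" using f "1.prems" unfolding strict_mono_rel_def by blast
    ultimately have "(f a, a) \<in> r - Id"
      using Linear_order_in_diff_Id[OF wo_rel.LIN[unfolded wo_rel_def, OF r] "1.prems" fa] by blast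
    then have "(f (f a), f a) \<in> r - Id" and "(f a, f (f a)) \<in> r"
      using f 1 fa unfolding strict_mono_rel_def by blast+
    then show False using wo_rel.ANTISYM[unfolded wo_rel_def, OF r] by (auto dest: antisymD)
  qed
qed

(* Otherwise r would map strictly increasingly into a proper initial segment of itself. *)
lemma strict_mono_rel_imp_ordLeq:
  assumes r: "Well_order r" and r': "Well_order r'" and f: "strict_mono_rel r r' f"
  shows "r \<le>o r'"
proof (rule ccontr)
  assume "\<not> r \<le>o r'"
  then obtain a where a: "a \<in> Field r" and "r' =o Restr r (underS r a)"
    using ordLess_iff_ordIso_Restr[OF r r'] not_ordLeq_iff_ordLess[OF r' r] by blast
  then obtain h where h: "iso r' (Restr r (underS r a)) h" unfolding ordIso_def by blast
  then have "strict_mono_rel r' r (id \<circ> h)"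
    using iso_imp_strict_mono_rel strict_mono_rel_comp strict_mono_rel_id[OF Int_lower1] by blast
  then have g: "strict_mono_rel r r (h \<circ> f)" using f strict_mono_rel_comp by fastforce
  have "f a \<in> Field r'" using f a unfolding strict_mono_rel_def by blast
  then have "h (f a) \<in> Field (Restr r (underS r a))" using iso_Field[OF h] by blast
  then have "h (f a) \<in> underS r a" by (rule subsetD[OF Field_Restr_subset])
  moreover have "(a, h (f a)) \<in> r" using strict_mono_rel_inflationary[OF r g a] by simp
  ultimately show False
    using wo_rel.ANTISYM[unfolded wo_rel_def, OF r] unfolding underS_def antisym_def by blast
qed

lemma ordLeq_imp_strict_mono_rel:
  assumes "r \<le>o r'"
  obtains f where "strict_mono_rel r r' f"
proof -
  obtain f where r: "Well_order r" and "embed r r' f" using assms unfolding ordLeq_def by blast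
  then have "compat r r' f" "inj_on f (Field r)" "f ` Field r \<subseteq> Field r'"
    using embed_compat embed_inj_on embed_Field by blast+
  then have "strict_mono_rel r r' f"
    unfolding strict_mono_rel_def compat_def inj_on_def by (auto; meson FieldI1 FieldI2)
  then show ?thesis by (rule that)
qed

lemma ordLeq_iff_strict_mono_rel:
  "Well_order r \<Longrightarrow> Well_order r' \<Longrightarrow> r \<le>o r' \<longleftrightarrow> (\<exists>f. strict_mono_rel r r' f)"
  by (metis ordLeq_imp_strict_mono_rel strict_mono_rel_imp_ordLeq)

lemma Restr_ordLeq_Restr:
  assumes "Well_order r" and "X \<subseteq> Y"
  shows "Restr r X \<le>o Restr r Y"
proof -
  have "Restr r X \<subseteq> Restr r Y" using assms(2) by blast
  then show ?thesis
    using strict_mono_rel_imp_ordLeq Well_order_Restr[OF assms(1)] strict_mono_rel_id by blast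
qed

definition incr_graph :: "'a rel \<Rightarrow> ('a \<times> 'a) set \<Rightarrow> 'a set \<Rightarrow> 'a set \<Rightarrow> bool" where
  "incr_graph r G D C \<longleftrightarrow> (\<forall>u\<in>D. \<exists>v. (u, v) \<in> G \<and> v \<in> C) \<and>
     (\<forall>u v u' v'. (u, v) \<in> G \<longrightarrow> (u', v') \<in> G \<longrightarrow> u \<in> D \<longrightarrow> u' \<in> D \<longrightarrow>
        (u, u') \<in> r - Id \<longrightarrow> (v, v') \<in> r - Id)"

lemma incr_graph_iff_ordLeq:
  assumes r: "Well_order r" and "D \<subseteq> Field r" "C \<subseteq> Field r"
  shows "(\<exists>G. incr_graph r G D C) \<longleftrightarrow> Restr r D \<le>o Restr r C"
proof -
  have FD: "Field (Restr r D) = D" and FC: "Field (Restr r C) = C"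
    using assms Field_Restr_Well_order[OF r] by blast+
  have "(\<exists>G. incr_graph r G D C) \<longleftrightarrow> (\<exists>f. strict_mono_rel (Restr r D) (Restr r C) f)"
  proof
    assume "\<exists>G. incr_graph r G D C"
    then obtain G where G: "incr_graph r G D C" by blast
    define f where "f u = (SOME v. (u, v) \<in> G \<and> v \<in> C)" for u
    have f: "(u, f u) \<in> G \<and> f u \<in> C" if "u \<in> D" for u
      using G that unfolding incr_graph_def f_def by (metis (mono_tags, lifting) someI_ex)
    have "strict_mono_rel (Restr r D) (Restr r C) f"
      unfolding strict_mono_rel_def FD FC using f G unfolding incr_graph_def by blast
    then show "\<exists>f. strict_mono_rel (Restr r D) (Restr r C) f" by blast
  next
    assume "\<exists>f. strict_mono_rel (Restr r D) (Restr r C) f"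
    then obtain f where "strict_mono_rel (Restr r D) (Restr r C) f" by blast
    then have "incr_graph r {(u, f u) | u. u \<in> D} D C"
      unfolding strict_mono_rel_def incr_graph_def FD FC by blast
    then show "\<exists>G. incr_graph r G D C" by blast
  qed
  also have "\<dots> \<longleftrightarrow> Restr r D \<le>o Restr r C"
    using ordLeq_iff_strict_mono_rel Well_order_Restr[OF r] by blast
  finally show ?thesis .
qed

lemma iso_rel_iff_ordIso:
  assumes r': "Well_order r'"
  shows "iso_rel r r' \<longleftrightarrow> r =o r'"
proof
  assume "iso_rel r r'"
  then obtain f where f: "bij_betw f (Field r) (Field r')"
    and pres: "\<forall>a\<in>Field r. \<forall>b\<in>Field r. (a, b) \<in> r \<longleftrightarrow> (f a, f b) \<in> r'"
    unfolding iso_rel_def by blast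
  let ?g = "inv_into (Field r) f"
  have g: "bij_betw ?g (Field r') (Field r)" by (rule bij_betw_inv_into[OF f])
  have eq: "r = dir_image r' ?g"
  proof (intro set_eqI iffI)
    fix p assume "p \<in> r"
    then obtain a b where p: "p = (a, b)" "a \<in> Field r" "b \<in> Field r" "(a, b) \<in> r"
      by (metis FieldI1 FieldI2 surj_pair)
    then have "(f a, f b) \<in> r'" using pres by blast
    moreover have "?g (f a) = a" "?g (f b) = b" using f p by (simp_all add: bij_betw_inv_into_left)
    ultimately show "p \<in> dir_image r' ?g" unfolding dir_image_def p by force
  next
    fix p assume "p \<in> dir_image r' ?g"
    then obtain a' b' where p: "p = (?g a', ?g b')" "(a', b') \<in> r'" unfolding dir_image_def by blast
    then have "a' \<in> Field r'" "b' \<in> Field r'" by (auto intro: FieldI1 FieldI2)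
    then have "?g a' \<in> Field r" "?g b' \<in> Field r" "f (?g a') = a'" "f (?g b') = b'"
      using f g by (simp_all add: bij_betw_apply bij_betw_inv_into_right)
    then show "p \<in> r" using p pres by simp
  qed
  have "r' =o dir_image r' ?g" by (rule dir_image_ordIso[OF r' bij_betw_imp_inj_on[OF g]])
  then show "r =o r'" using ordIso_symmetric eq by simp
next
  assume "r =o r'"
  then obtain f where "iso r r' f" unfolding ordIso_def by blast
  then show "iso_rel r r'" unfolding iso_rel_def iso_iff2 by blast
qed

lemma iso_rel_Restr_vimage:
  assumes S: "Well_order S" and h: "iso S T h" and Y: "Y \<subseteq> Field T"
    and g: "bij_betw g Y (Field t)"
    and pres: "\<forall>y\<in>Y. \<forall>y'\<in>Y. (y, y') \<in> T \<longleftrightarrow> (g y, g y') \<in> t"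
  shows "iso_rel (Restr S (Field S \<inter> h -` Y)) t"
proof -
  let ?X = "Field S \<inter> h -` Y"
  have hb: "bij_betw h (Field S) (Field T)"
    and hp: "\<forall>x\<in>Field S. \<forall>x'\<in>Field S. (x, x') \<in> S \<longleftrightarrow> (h x, h x') \<in> T"
    using h unfolding iso_iff2 by blast+
  have FX: "Field (Restr S ?X) = ?X" by (simp add: Field_Restr_Well_order[OF S])
  have "h ` ?X = Y"
  proof
    show "Y \<subseteq> h ` ?X"
    proof
      fix y assume "y \<in> Y"
      moreover obtain x where "x \<in> Field S" "y = h x"
        using \<open>y \<in> Y\<close> Y bij_betw_imp_surj_on[OF hb] by blast
      ultimately show "y \<in> h ` ?X" by blast
    qed
  qed blast
  then have "bij_betw h ?X Y" by (rule bij_betw_subset[OF hb Int_lower1])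
  then have "bij_betw (g \<circ> h) (Field (Restr S ?X)) (Field t)"
    unfolding FX using g by (rule bij_betw_trans)
  moreover have "\<forall>x\<in>Field (Restr S ?X). \<forall>x'\<in>Field (Restr S ?X).
      (x, x') \<in> Restr S ?X \<longleftrightarrow> ((g \<circ> h) x, (g \<circ> h) x') \<in> t"
    unfolding FX using hp pres by auto
  ultimately show ?thesis unfolding iso_rel_def by blast
qed

lemma natLeq_on_card_ordIso:
  assumes W: "Well_order l" and fin: "finite (Field l)"
  shows "natLeq_on (card (Field l)) =o l"
proof -
  let ?n = "card (Field l)"
  obtain h where h: "bij_betw h (Field l) {0..<?n}" using ex_bij_betw_finite_nat[OF fin] by blast
  then have inj: "inj_on h (Field l)" by (simp add: bij_betw_def)
  have wo: "well_order_on {x. x < ?n} (dir_image l h)"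
    using Well_order_dir_image[OF W inj] h unfolding dir_image_Field bij_betw_def
    by (auto simp: atLeast0LessThan lessThan_def)
  have "natLeq_on ?n =o dir_image l h"
    by (rule finite_well_order_on_ordIso[OF _ natLeq_on_well_order_on wo]) simp
  then show ?thesis using dir_image_ordIso[OF W inj] ordIso_symmetric ordIso_transitive by blast
qed

lemma strict_mono_enumerate_range:
  fixes f :: "nat \<Rightarrow> nat"
  assumes f: "strict_mono f"
  shows "enumerate (range f) n = f n"
proof (induction n)
  case 0
  show ?case
    unfolding enumerate_0 using f by (auto intro!: Least_equality simp: strict_mono_less_eq)
next
  case (Suc n)
  have "infinite (range f)" using f range_inj_infinite strict_mono_imp_inj_on by blast
  then have "enumerate (range f) (Suc n) = (LEAST s. s \<in> range f \<and> f n < s)"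
    using enumerate_Suc''[of "range f" n] Suc.IH by simp
  also have "\<dots> = f (Suc n)"
    using f by (auto intro!: Least_equality simp: strict_mono_less strict_mono_less_eq Suc_le_eq)
  finally show ?case .
qed

(* Monotonicity makes the enumeration unique (enum_graph_iff), so that the copy read off
   a witness does not depend on the witness. *)
definition enum_graph :: "(nat \<times> nat) set \<Rightarrow> nat set \<Rightarrow> bool" where
  "enum_graph G Y \<longleftrightarrow> (\<forall>i. \<exists>b. (i, b) \<in> G) \<and>
     (\<forall>i b b'. (i, b) \<in> G \<longrightarrow> (i, b') \<in> G \<longrightarrow> b = b') \<and>
     (\<forall>i i' b b'. (i, b) \<in> G \<longrightarrow> (i', b') \<in> G \<longrightarrow> i < i' \<longrightarrow> b < b') \<and> Range G = Y"

lemma enum_graph_iff: "enum_graph G Y \<longleftrightarrow> infinite Y \<and> G = range (\<lambda>i. (i, enumerate Y i))"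
proof
  assume "enum_graph G Y"
  then have total: "\<forall>i. \<exists>b. (i, b) \<in> G"
    and functional: "\<And>i b b'. (i, b) \<in> G \<Longrightarrow> (i, b') \<in> G \<Longrightarrow> b = b'"
    and incr: "\<And>i i' b b'. (i, b) \<in> G \<Longrightarrow> (i', b') \<in> G \<Longrightarrow> i < i' \<Longrightarrow> b < b'"
    and Y: "Range G = Y"
    unfolding enum_graph_def by blast+
  define f where "f i = (SOME b. (i, b) \<in> G)" for i
  have fG: "(i, f i) \<in> G" for i unfolding f_def using total by (metis someI_ex)
  have graph: "G = range (\<lambda>i. (i, f i))" using fG functional by auto
  have "strict_mono f" unfolding strict_mono_def using fG incr by blast
  moreover have "Y = range f" using Y graph by auto
  ultimately have "infinite Y" "enumerate Y = f"
    using range_inj_infinite[OF strict_mono_imp_inj_on] strict_mono_enumerate_range by auto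
  then show "infinite Y \<and> G = range (\<lambda>i. (i, enumerate Y i))" using graph by simp
next
  assume Y: "infinite Y \<and> G = range (\<lambda>i. (i, enumerate Y i))"
  then have "Range G = Y" using range_enumerate[of Y] by (simp add: Range_snd image_image)
  then show "enum_graph G Y" unfolding enum_graph_def using Y enumerate_mono by auto
qed

lemma range_graph_relcomp: "range (\<lambda>i. (i, f i)) O r O (range (\<lambda>i. (i, f i)))\<inverse> = inv_image r f"
  by (auto simp: inv_image_def)

lemma inv_image_enumerate:
  fixes r :: "(nat \<times> nat) set"
  assumes r: "Well_order r" and Y: "Field r = Y" "infinite Y"
  shows "Field (inv_image r (enumerate Y)) = UNIV" and "inv_image r (enumerate Y) =o r"
proof -
  have "(i, i) \<in> inv_image r (enumerate Y)" for i
    using enumerate_in_set[OF Y(2)] wo_rel.REFL[unfolded wo_rel_def, OF r] Y(1)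
    unfolding refl_on_def by auto
  then show F: "Field (inv_image r (enumerate Y)) = UNIV" by (metis FieldI1 UNIV_eq_I)
  have "iso_rel (inv_image r (enumerate Y)) r"
    unfolding iso_rel_def F Y(1) using bij_enumerate[OF Y(2)] by auto
  then show "inv_image r (enumerate Y) =o r" using iso_rel_iff_ordIso[OF r] by blast
qed

section \<open>Ordinal sums and additive indecomposability\<close>

lemma osum_iff [simp]:
  "(Inl a, Inl b) \<in> osum r s \<longleftrightarrow> (a, b) \<in> r"
  "(Inr c, Inr d) \<in> osum r s \<longleftrightarrow> (c, d) \<in> s"
  "(Inl a, Inr d) \<in> osum r s \<longleftrightarrow> a \<in> Field r \<and> d \<in> Field s"
  "(Inr c, Inl b) \<notin> osum r s"
  unfolding osum_def by auto

lemma Field_osum: "Field (osum r s) = Inl ` Field r \<union> Inr ` Field s"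
  by (auto simp: osum_def Field_def Domain.simps Range.simps image_iff)

lemma Linear_order_osum:
  assumes r: "Linear_order r" and s: "Linear_order s"
  shows "Linear_order (osum r s)"
proof -
  have "refl_on (Field (osum r s)) (osum r s)"
    using r s unfolding Field_osum order_on_defs refl_on_def by auto
  moreover have "trans (osum r s)"
  proof (rule transI)
    fix x y z assume "(x, y) \<in> osum r s" "(y, z) \<in> osum r s"
    then show "(x, z) \<in> osum r s"
      using r s unfolding order_on_defs
      by (cases x; cases y; cases z) (auto dest: transD intro: FieldI1 FieldI2)
  qed
  moreover have "antisym (osum r s)"
  proof (rule antisymI)
    fix x y assume "(x, y) \<in> osum r s" "(y, x) \<in> osum r s"
    then show "x = y"
      using r s unfolding order_on_defs by (cases x; cases y) (auto dest: antisymD)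
  qed
  moreover have "total_on (Field (osum r s)) (osum r s)"
    using r s unfolding Field_osum order_on_defs total_on_def by (auto; blast)
  moreover have "osum r s \<subseteq> Field (osum r s) \<times> Field (osum r s)"
    by (auto intro: FieldI1 FieldI2)
  ultimately show ?thesis unfolding order_on_defs by blast
qed

lemma Well_order_osum:
  assumes r: "Well_order r" and s: "Well_order s"
  shows "Well_order (osum r s)"
proof -
  have lin: "Linear_order (osum r s)"
    using Linear_order_osum r s unfolding well_order_on_def by blast
  have least: "\<exists>m\<in>Y. \<forall>y\<in>Y. (m, y) \<in> t"
    if "Well_order t" "Y \<subseteq> Field t" "Y \<noteq> {}" for t :: "'c rel" and Y
    using that Linear_order_Well_order_iff[of t] unfolding well_order_on_def by blast
  have "\<exists>m\<in>X. \<forall>x\<in>X. (m, x) \<in> osum r s" if X: "X \<subseteq> Field (osum r s)" "X \<noteq> {}" for X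
  proof (cases "Inl -` X = {}")
    case False
    moreover have "Inl -` X \<subseteq> Field r" using X(1) unfolding Field_osum by auto
    ultimately obtain m where "m \<in> Inl -` X" "\<forall>a\<in>Inl -` X. (m, a) \<in> r"
      using least[OF r] by blast
    moreover have "m \<in> Field r" using calculation(1) \<open>Inl -` X \<subseteq> Field r\<close> by blast
    ultimately show ?thesis using X(1) unfolding Field_osum by (intro bexI[of _ "Inl m"]) auto
  next
    case True
    obtain x where "x \<in> X" using X(2) by blast
    with True have "Inr -` X \<noteq> {}" by (cases x) auto
    moreover have "Inr -` X \<subseteq> Field s" using X(1) unfolding Field_osum by auto
    ultimately obtain m where "m \<in> Inr -` X" "\<forall>b\<in>Inr -` X. (m, b) \<in> s"
      using least[OF s] by blast
    moreover have "(Inr m, x) \<in> osum r s" if "x \<in> X" for x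
      using that calculation(2) True by (cases x) auto
    ultimately show ?thesis by blast
  qed
  then show ?thesis using Linear_order_Well_order_iff[OF lin] by blast
qed

lemma add_indecompD:
  assumes "add_indecomp l" and "b <o l" and "g <o l"
  shows "(osum b g :: ((nat + nat) \<times> (nat + nat)) set) <o l"
proof -
  have "Well_order b" "Well_order g"
    using assms(2,3) ordLess_imp_ordLeq ordLeq_Well_order_simp by blast+
  with assms show ?thesis unfolding add_indecomp_def by simp
qed

lemma add_indecomp_ordIso:
  assumes l: "add_indecomp l" and iso: "l =o l'"
  shows "add_indecomp l'"
proof -
  obtain f where f: "iso l l' f" and l': "Well_order l'" using iso unfolding ordIso_def by blast
  have "l \<noteq> {}" using l unfolding add_indecomp_def by blast
  then have "Field l \<noteq> {}" by (metis Field_def Un_empty Domain_empty_iff)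
  then have "l' \<noteq> {}" using iso_Field[OF f] by force
  moreover have "(osum b g :: ((nat + nat) \<times> (nat + nat)) set) <o l'" if "b <o l'" "g <o l'" for b g
  proof -
    have "b <o l" "g <o l" using that ordIso_symmetric[OF iso] ordLess_ordIso_trans by blast+
    then show ?thesis using add_indecompD[OF l] iso ordLess_ordIso_trans by blast
  qed
  ultimately show ?thesis using l' unfolding add_indecomp_def by blast
qed

(* l embeds into the sum of the two segments; were the final one not longer, both would be
   shorter than l, and so would be their sum. *)
lemma add_indecomp_underS_ordLess_above:
  assumes l: "add_indecomp l" and x: "x \<in> Field l"
  shows "Restr l (underS l x) <o Restr l (above l x)"
proof (rule ccontr)
  let ?U = "underS l x" and ?V = "above l x"
  have W: "Well_order l" using l unfolding add_indecomp_def by blast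
  have WU: "Well_order (Restr l ?U)" and WV: "Well_order (Restr l ?V)"
    using Well_order_Restr[OF W] by blast+
  have U: "Restr l ?U <o l" using underS_Restr_ordLess[OF W] x by blast
  assume "\<not> Restr l ?U <o Restr l ?V"
  then have "Restr l ?V <o l"
    using not_ordLess_iff_ordLeq[OF WV WU] U ordLeq_ordLess_trans by blast
  then have small: "osum (Restr l ?U) (Restr l ?V) <o l" by (rule add_indecompD[OF l U])
  define \<phi> where "\<phi> y = (if y \<in> ?U then Inl y else Inr y)" for y
  have V: "y \<in> ?V" if "y \<in> Field l" "y \<notin> ?U" for y
    using that x wo_rel.TOTALS[unfolded wo_rel_def, OF W] wo_rel.REFL[unfolded wo_rel_def, OF W]
    unfolding underS_def above_def refl_on_def by blast
  have "strict_mono_rel l (osum (Restr l ?U) (Restr l ?V)) \<phi>"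
    unfolding strict_mono_rel_def
  proof (intro conjI ballI allI impI)
    fix y assume "y \<in> Field l"
    then show "\<phi> y \<in> Field (osum (Restr l ?U) (Restr l ?V))"
      using V unfolding Field_osum Field_Restr_Well_order[OF W] \<phi>_def by auto
  next
    fix y z assume yz: "(y, z) \<in> l - Id"
    then have "y \<in> Field l" "z \<in> Field l" by (auto intro: FieldI1 FieldI2)
    moreover have "z \<notin> ?U" if "y \<notin> ?U"
    proof
      assume "z \<in> ?U"
      then have "(z, x) \<in> l" "z \<noteq> x" unfolding underS_def by auto
      moreover have "(x, y) \<in> l" using V \<open>y \<in> Field l\<close> that unfolding above_def by blast
      ultimately show False using yz wo_rel.TRANS[unfolded wo_rel_def, OF W]
          wo_rel.ANTISYM[unfolded wo_rel_def, OF W] unfolding trans_def antisym_def by blast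
    qed
    ultimately show "(\<phi> y, \<phi> z) \<in> osum (Restr l ?U) (Restr l ?V) - Id"
      using yz V unfolding \<phi>_def by (auto simp: Field_Restr_Well_order[OF W])
  qed
  then have "l \<le>o osum (Restr l ?U) (Restr l ?V)"
    using strict_mono_rel_imp_ordLeq[OF W Well_order_osum[OF WU WV]] by blast
  then show False using small not_ordLess_ordLeq by blast
qed

lemma osum_add_indecomp_ordIso:
  fixes b l :: "(nat \<times> nat) set"
  assumes l: "add_indecomp l" and b: "b <o l"
  shows "osum b l =o l"
proof -
  have W: "Well_order l" using l unfolding add_indecomp_def by blast
  have Wb: "Well_order b" using b ordLess_imp_ordLeq ordLeq_Well_order_simp by blast
  let ?O = "osum b l"
  have WO: "Well_order ?O" by (rule Well_order_osum[OF Wb W])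
  have "strict_mono_rel l ?O Inr"
    unfolding strict_mono_rel_def Field_osum by auto
  then have ge: "l \<le>o ?O" by (rule strict_mono_rel_imp_ordLeq[OF W WO])
  have "\<not> l <o ?O"
  proof
    assume "l <o ?O"
    then obtain z where z: "z \<in> Field ?O" and iso: "l =o Restr ?O (underS ?O z)"
      using ordLess_iff_ordIso_Restr[OF WO W] by blast
    let ?Q = "Restr ?O (underS ?O z)"
    have WQ: "Well_order ?Q" by (rule Well_order_Restr[OF WO])
    show False
    proof (cases z)
      \<comment> \<open>A proper initial segment of b + l is at most b or b + (an initial segment of l).\<close>
      case (Inl y)
      have "\<exists>u v. p = (Inl u, Inl v) \<and> (u, v) \<in> b" if "p \<in> ?Q" for p
        using that Inl unfolding underS_def osum_def by auto
      then have "strict_mono_rel ?Q b projl"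
        unfolding strict_mono_rel_def Field_def by fastforce
      then have "?Q \<le>o b" by (rule strict_mono_rel_imp_ordLeq[OF WQ Wb])
      then show False using iso b ordIso_ordLeq_trans not_ordLess_ordLeq by blast
    next
      case (Inr y)
      then have y: "y \<in> Field l" using z unfolding Field_osum by auto
      have "?Q \<subseteq> osum b (Restr l (underS l y))"
      proof
        fix p assume "p \<in> ?Q"
        then show "p \<in> osum b (Restr l (underS l y))"
          using Inr unfolding underS_def osum_def
          by (auto simp: Field_Restr_Well_order[OF W] intro: FieldI1 FieldI2)
      qed
      then have "?Q \<le>o osum b (Restr l (underS l y))"
        using strict_mono_rel_imp_ordLeq[OF WQ Well_order_osum[OF Wb Well_order_Restr[OF W]]]
          strict_mono_rel_id by blast
      moreover have "osum b (Restr l (underS l y)) <o l"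
        using add_indecompD[OF l b] underS_Restr_ordLess[OF W] y by blast
      ultimately show False
        using iso ordIso_ordLeq_trans ordLeq_ordLess_trans ordLess_irreflexive by blast
    qed
  qed
  then show ?thesis using ge ordLeq_iff_ordLess_or_ordIso ordIso_symmetric by blast
qed

definition reorder :: "'a rel \<Rightarrow> 'a set \<Rightarrow> 'a rel" where
  "reorder r P = {(x, y). (x, x) \<in> r \<and> (y, y) \<in> r \<and>
     (x \<notin> P \<and> y \<in> P \<or> (x, y) \<in> r \<and> (x \<in> P \<longleftrightarrow> y \<in> P))}"

lemma reorder_cong: "P \<inter> Field r = Q \<inter> Field r \<Longrightarrow> reorder r P = reorder r Q"
  unfolding reorder_def by (auto intro: FieldI1)

lemma Field_reorder:
  assumes "Well_order r"
  shows "Field (reorder r P) = Field r"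
  using Well_order_refl_iff[OF assms] unfolding reorder_def Field_def by auto

lemma reorder_ordIso_osum:
  assumes r: "Well_order r"
  shows "reorder r P =o osum (Restr r (Field r - P)) (Restr r (Field r \<inter> P))"
proof -
  let ?O = "osum (Restr r (Field r - P)) (Restr r (Field r \<inter> P))"
  note F = Field_reorder[OF r]
  define \<phi> where "\<phi> x = (if x \<in> P then Inr x else Inl x)" for x :: 'a
  have "bij_betw \<phi> (Field (reorder r P)) (Field ?O)"
    unfolding F Field_osum Field_Restr_Well_order[OF r] bij_betw_def inj_on_def \<phi>_def
    by (auto simp: image_iff)
  moreover have "\<forall>x\<in>Field (reorder r P). \<forall>y\<in>Field (reorder r P).
      (x, y) \<in> reorder r P \<longleftrightarrow> (\<phi> x, \<phi> y) \<in> ?O"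
    unfolding F reorder_def \<phi>_def
    by (auto simp: Field_Restr_Well_order[OF r] Well_order_refl_iff[OF r])
  ultimately have "iso_rel (reorder r P) ?O" unfolding iso_rel_def by blast
  then show ?thesis
    using iso_rel_iff_ordIso Well_order_osum Well_order_Restr r by blast
qed

section \<open>Splitting a copy of an ordinal sum\<close>

locale ordinal_sum_split =
  fixes S :: "(nat \<times> nat) set" and A B :: "nat set"
  assumes Well_order_S: "Well_order S"
    and Field_S: "Field S = A \<union> B"
    and disjoint: "A \<inter> B = {}"
    and A_before_B: "\<And>a b. a \<in> A \<Longrightarrow> b \<in> B \<Longrightarrow> (a, b) \<in> S"
    and B_shorter: "Restr S B <o Restr S A"
    and A_indecomp: "add_indecomp (Restr S A)"
begin

lemma not_B_before_A: "a \<in> A \<Longrightarrow> b \<in> B \<Longrightarrow> (b, a) \<notin> S"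
  using A_before_B disjoint wo_rel.ANTISYM[unfolded wo_rel_def, OF Well_order_S]
  unfolding antisym_def by blast

lemma underS_subset_A: "c \<in> A \<Longrightarrow> underS S c \<subseteq> A"
  using Field_S not_B_before_A unfolding underS_def by (blast intro: FieldI1)

lemma above_subset_B: "c \<in> B \<Longrightarrow> above S c \<subseteq> B"
  using Field_S not_B_before_A unfolding above_def by (blast intro: FieldI2)

lemma A_subset_underS: "c \<in> B \<Longrightarrow> A \<subseteq> underS S c"
  using A_before_B disjoint unfolding underS_def by blast

lemma Field_Restr_A: "Field (Restr S A) = A"
  using Field_S by (auto simp: Field_Restr_Well_order[OF Well_order_S])

lemma Field_Restr_B: "Field (Restr S B) = B"
  using Field_S by (auto simp: Field_Restr_Well_order[OF Well_order_S])

lemma underS_ordLess_above: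
  assumes c: "c \<in> A"
  shows "Restr S (underS S c) <o Restr S (above S c)"
proof -
  have "c \<in> Field (Restr S A)" using c Field_Restr_A by simp
  then have "Restr (Restr S A) (underS (Restr S A) c) <o Restr (Restr S A) (above (Restr S A) c)"
    by (rule add_indecomp_underS_ordLess_above[OF A_indecomp])
  moreover have "Restr (Restr S A) (underS (Restr S A) c) = Restr S (underS S c)"
    using underS_subset_A[OF c] c unfolding underS_def by blast
  moreover have "Restr (Restr S A) (above (Restr S A) c) = Restr S (above S c \<inter> A)"
    using c unfolding above_def by blast
  moreover have "Restr S (above S c \<inter> A) \<le>o Restr S (above S c)"
    by (rule Restr_ordLeq_Restr[OF Well_order_S]) blast
  ultimately show ?thesis using ordLess_ordLeq_trans by metis
qed

lemma above_ordLess_underS: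
  assumes c: "c \<in> B"
  shows "Restr S (above S c) <o Restr S (underS S c)"
proof -
  have "Restr S (above S c) \<le>o Restr S B"
    using Restr_ordLeq_Restr[OF Well_order_S above_subset_B[OF c]] .
  also have "Restr S B <o Restr S A" by (rule B_shorter)
  also have "Restr S A \<le>o Restr S (underS S c)"
    using Restr_ordLeq_Restr[OF Well_order_S A_subset_underS[OF c]] .
  finally show ?thesis .
qed

lemma in_A_iff: "c \<in> Field S \<Longrightarrow> c \<in> A \<longleftrightarrow> Restr S (underS S c) \<le>o Restr S (above S c)"
  using underS_ordLess_above above_ordLess_underS ordLess_imp_ordLeq not_ordLess_ordLeq Field_S
  by blast

lemma in_B_iff: "c \<in> Field S \<Longrightarrow> c \<in> B \<longleftrightarrow> Restr S (above S c) \<le>o Restr S (underS S c)"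
  using underS_ordLess_above above_ordLess_underS ordLess_imp_ordLeq not_ordLess_ordLeq Field_S
  by blast

lemma reorder_ordIso: "reorder S A =o Restr S A"
proof -
  have "Field S - A = B" "Field S \<inter> A = A" using Field_S disjoint by auto
  then have "reorder S A =o osum (Restr S B) (Restr S A)"
    using reorder_ordIso_osum[OF Well_order_S, of A] by simp
  also have "osum (Restr S B) (Restr S A) =o Restr S A"
    by (rule osum_add_indecomp_ordIso[OF A_indecomp B_shorter])
  finally show ?thesis .
qed

lemma inv_image_enumerate_B:
  assumes "infinite B"
  shows "Field (inv_image S (enumerate B)) = UNIV" and "inv_image S (enumerate B) =o Restr S B"
proof -
  have "inv_image S (enumerate B) = inv_image (Restr S B) (enumerate B)"
    using enumerate_in_set[OF assms] unfolding inv_image_def by auto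
  then show "Field (inv_image S (enumerate B)) = UNIV" "inv_image S (enumerate B) =o Restr S B"
    using inv_image_enumerate[OF Well_order_Restr[OF Well_order_S] Field_Restr_B assms] by simp_all
qed

end

lemma copy_of_osum_split:
  fixes l0 l1 :: "(nat \<times> nat) set"
  assumes S: "copy_of S (osum l0 l1)" and l0: "add_indecomp l0" and l1: "Well_order l1"
    and lt: "l1 <o l0"
  obtains A B where "ordinal_sum_split S A B" "Restr S A =o l0" "Restr S B =o l1"
proof -
  have W0: "Well_order l0" using l0 unfolding add_indecomp_def by blast
  have WO: "Well_order (osum l0 l1)" by (rule Well_order_osum[OF W0 l1])
  have "S =o osum l0 l1" using S iso_rel_iff_ordIso[OF WO] unfolding copy_of_def by blast
  then obtain h where WS: "Well_order S" and h: "iso S (osum l0 l1) h"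
    unfolding ordIso_def by blast
  define A where "A = Field S \<inter> h -` Inl ` Field l0"
  define B where "B = Field S \<inter> h -` Inr ` Field l1"
  have A: "Restr S A =o l0"
  proof -
    have g: "bij_betw projl (Inl ` Field l0) (Field l0)"
      by (auto simp: bij_betw_def inj_on_def image_image)
    have "iso_rel (Restr S A) l0"
      unfolding A_def by (rule iso_rel_Restr_vimage[OF WS h _ g]) (auto simp: Field_osum)
    then show ?thesis using iso_rel_iff_ordIso[OF W0] by blast
  qed
  have B: "Restr S B =o l1"
  proof -
    have g: "bij_betw projr (Inr ` Field l1) (Field l1)"
      by (auto simp: bij_betw_def inj_on_def image_image)
    have "iso_rel (Restr S B) l1"
      unfolding B_def by (rule iso_rel_Restr_vimage[OF WS h _ g]) (auto simp: Field_osum)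
    then show ?thesis using iso_rel_iff_ordIso[OF l1] by blast
  qed
  have "ordinal_sum_split S A B"
  proof
    show "Well_order S" by (rule WS)
    have hF: "h x \<in> Inl ` Field l0 \<union> Inr ` Field l1" if "x \<in> Field S" for x
      using that iso_Field[OF h] unfolding Field_osum by blast
    show "Field S = A \<union> B" unfolding A_def B_def using hF by fastforce
    show "A \<inter> B = {}" unfolding A_def B_def by auto
    have "\<forall>x\<in>Field S. \<forall>x'\<in>Field S. (x, x') \<in> S \<longleftrightarrow> (h x, h x') \<in> osum l0 l1"
      using h unfolding iso_iff2 by blast
    then show "(a, b) \<in> S" if "a \<in> A" "b \<in> B" for a b
      using that unfolding A_def B_def by auto
    show "Restr S B <o Restr S A"
      using B lt ordIso_symmetric[OF A] ordIso_ordLess_trans ordLess_ordIso_trans by blast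
    show "add_indecomp (Restr S A)" by (rule add_indecomp_ordIso[OF l0 ordIso_symmetric[OF A]])
  qed
  then show ?thesis using A B that by blast
qed

section \<open>Arithmetical formulas over a coded relation\<close>

lemma scons_simps [simp]:
  "scons x e 0 = x" "scons x e (Suc k) = e k" "scons x e (numeral n) = e (pred_numeral n)"
  by (simp_all add: scons_def numeral_eq_Suc)

(* Twice prod_encode: terms cannot halve, so membership of prod_encode (a, b) in the oracle
   is expressed as \<exists>m. m + m = pair_code a b \<and> m \<in> oracle. *)
definition pair_code :: "nat \<Rightarrow> nat \<Rightarrow> nat" where
  "pair_code u v = (u + v) * (u + v + 1) + 2 * u"

lemma pair_code_eq: "pair_code u v = 2 * prod_encode (u, v)"
proof -
  have "2 * ((u + v) * Suc (u + v) div 2) = (u + v) * Suc (u + v)" by simp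
  then show ?thesis by (simp add: pair_code_def prod_encode_def triangle_def algebra_simps)
qed

lemma pair_code_inject [simp]: "pair_code u v = pair_code u' v' \<longleftrightarrow> u = u' \<and> v = v'"
  by (simp add: pair_code_eq prod_encode_eq)

definition PairT :: "tm \<Rightarrow> tm \<Rightarrow> tm" where
  "PairT s t = Plus (Times (Plus s t) (Sc (Plus s t))) (Plus s s)"

lemma evl_PairT [simp]: "evl e (PairT s t) = pair_code (evl e s) (evl e t)"
  by (simp add: PairT_def pair_code_def)

fun shift :: "tm \<Rightarrow> tm" where
  "shift (V i) = V (Suc i)"
| "shift Zero = Zero"
| "shift (Sc t) = Sc (shift t)"
| "shift (Plus s t) = Plus (shift s) (shift t)"
| "shift (Times s t) = Times (shift s) (shift t)"

lemma evl_shift [simp]: "evl (scons m e) (shift t) = evl e t"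
  by (induction t) auto

fun NumT :: "nat \<Rightarrow> tm" where
  "NumT 0 = Zero"
| "NumT (Suc k) = Sc (NumT k)"

lemma evl_NumT [simp]: "evl e (NumT k) = k"
  by (induction k) auto

definition ImpF :: "fm \<Rightarrow> fm \<Rightarrow> fm" where
  "ImpF p q = Disj (Neg p) q"

lemma sat_ImpF [simp]: "sat D e E (ImpF p q) \<longleftrightarrow> (sat D e E p \<longrightarrow> sat D e E q)"
  by (simp add: ImpF_def)

lemma arith_ImpF [simp]: "arith (ImpF p q) \<longleftrightarrow> arith p \<and> arith q"
  by (simp add: ImpF_def)

definition coded_rel :: "nat set \<Rightarrow> (nat \<times> nat) set" where
  "coded_rel D = {(a, b). prod_encode (a, b) \<in> D}"

lemma coded_rel_diag [simp]: "coded_rel (diag S) = S"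
  by (auto simp: coded_rel_def diag_def inj_image_mem_iff[OF inj_prod_encode])

definition RelF :: "tm \<Rightarrow> tm \<Rightarrow> fm" where
  "RelF s t = ExN (Conj (Eq (Plus (V 0) (V 0)) (PairT (shift s) (shift t))) (Orc (V 0)))"

lemma double_eq_double_iff: "m + m = 2 * (k :: nat) \<longleftrightarrow> m = k"
  by auto

lemma sat_RelF [simp]: "sat D e E (RelF s t) \<longleftrightarrow> (evl e s, evl e t) \<in> coded_rel D"
  by (simp add: RelF_def coded_rel_def pair_code_eq double_eq_double_iff)

definition StrictF :: "tm \<Rightarrow> tm \<Rightarrow> fm" where
  "StrictF s t = Conj (RelF s t) (Neg (Eq s t))"

lemma sat_StrictF [simp]: "sat D e E (StrictF s t) \<longleftrightarrow> (evl e s, evl e t) \<in> coded_rel D - Id"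
  by (simp add: StrictF_def)

lemma arith_RelF_StrictF [simp]: "arith (RelF s t)" "arith (StrictF s t)"
  by (simp_all add: RelF_def StrictF_def)

definition PairsF :: "fm \<Rightarrow> fm" where
  "PairsF p = ExN (ExN (Conj (Eq (Plus (V 2) (V 2)) (PairT (V 1) (V 0))) p))"

lemma arith_PairsF [simp]: "arith (PairsF p) \<longleftrightarrow> arith p"
  by (simp add: PairsF_def)

lemma sat_PairsF:
  assumes "\<And>e. sat D e E p \<longleftrightarrow> (e 1, e 0) \<in> R"
  shows "sat D e E (PairsF p) \<longleftrightarrow> e 0 \<in> prod_encode ` R"
proof -
  have "sat D e E (PairsF p) \<longleftrightarrow> (\<exists>x y. e 0 = prod_encode (x, y) \<and> (x, y) \<in> R)"
    unfolding PairsF_def by (simp add: assms pair_code_eq double_eq_double_iff)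
  then show ?thesis by (auto simp: image_iff)
qed

definition slice :: "nat set \<Rightarrow> nat \<Rightarrow> nat set" where
  "slice X k = {m. pair_code k m \<in> X}"

definition graph_code :: "nat set \<Rightarrow> (nat \<times> nat) set" where
  "graph_code Y = {(u, v). pair_code u v \<in> Y}"

definition code_slices :: "(nat \<Rightarrow> nat set) \<Rightarrow> nat set" where
  "code_slices F = {pair_code k m | k m. m \<in> F k}"

definition code_graph :: "(nat \<times> nat) set \<Rightarrow> nat set" where
  "code_graph G = {pair_code u v | u v. (u, v) \<in> G}"

lemma slice_code_slices [simp]: "slice (code_slices F) = F"
  by (auto simp: slice_def code_slices_def)

lemma graph_code_code_graph [simp]: "graph_code (code_graph G) = G"
  by (auto simp: graph_code_def code_graph_def)

(* The set variable of the \<Sigma>\<^sup>1\<^sub>1 definitions codes, in three slices, a set of bits (meant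
   to be the \<lambda>\<^sub>0-part), for each element c the graph of an increasing map telling on which
   side of the sum c lies, and an enumeration of the \<lambda>\<^sub>1-part. *)
definition wit_bits :: "nat set \<Rightarrow> nat set" where
  "wit_bits X = slice X 0"

definition wit_emb :: "nat set \<Rightarrow> nat \<Rightarrow> (nat \<times> nat) set" where
  "wit_emb X c = graph_code (slice (slice X 1) c)"

definition wit_enum :: "nat set \<Rightarrow> (nat \<times> nat) set" where
  "wit_enum X = graph_code (slice X 2)"

definition witness :: "nat set \<Rightarrow> (nat \<Rightarrow> (nat \<times> nat) set) \<Rightarrow> (nat \<times> nat) set \<Rightarrow> nat set" where
  "witness P W G = code_slices (\<lambda>k. if k = 0 then P
     else if k = 1 then code_slices (\<lambda>c. code_graph (W c)) else code_graph G)"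

lemma witness_components [simp]:
  "wit_bits (witness P W G) = P" "wit_emb (witness P W G) = W" "wit_enum (witness P W G) = G"
  by (simp_all add: wit_bits_def wit_emb_def wit_enum_def witness_def fun_eq_iff)

definition BitF :: "tm \<Rightarrow> fm" where
  "BitF t = Mem (PairT (NumT 0) t) 0"

definition EmbF :: "tm \<Rightarrow> tm \<Rightarrow> tm \<Rightarrow> fm" where
  "EmbF x u v = Mem (PairT (NumT 1) (PairT x (PairT u v))) 0"

definition EnumF :: "tm \<Rightarrow> tm \<Rightarrow> fm" where
  "EnumF i b = Mem (PairT (NumT 2) (PairT i b)) 0"

lemma sat_witness_atoms [simp]:
  "sat D e E (BitF t) \<longleftrightarrow> evl e t \<in> wit_bits (E 0)"
  "sat D e E (EmbF x u v) \<longleftrightarrow> (evl e u, evl e v) \<in> wit_emb (E 0) (evl e x)"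
  "sat D e E (EnumF i b) \<longleftrightarrow> (evl e i, evl e b) \<in> wit_enum (E 0)"
  by (simp_all add: BitF_def EmbF_def EnumF_def wit_bits_def wit_emb_def wit_enum_def
      slice_def graph_code_def)

lemma arith_witness_atoms [simp]: "arith (BitF t)" "arith (EmbF x u v)" "arith (EnumF i b)"
  by (simp_all add: BitF_def EmbF_def EnumF_def)

abbreviation "shift2 t \<equiv> shift (shift t)"

abbreviation "shift4 t \<equiv> shift2 (shift2 t)"

definition IncrGraphF :: "(tm \<Rightarrow> tm \<Rightarrow> fm) \<Rightarrow> (tm \<Rightarrow> tm \<Rightarrow> fm) \<Rightarrow> tm \<Rightarrow> fm" where
  "IncrGraphF domF codF x = Conj
    (AllN (ImpF (domF (shift x) (V 0))
      (ExN (Conj (EmbF (shift2 x) (V 1) (V 0)) (codF (shift2 x) (V 0))))))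
    (AllN (AllN (AllN (AllN (ImpF
      (Conj (EmbF (shift4 x) (V 3) (V 2)) (Conj (EmbF (shift4 x) (V 1) (V 0))
        (Conj (domF (shift4 x) (V 3)) (Conj (domF (shift4 x) (V 1)) (StrictF (V 3) (V 1))))))
      (StrictF (V 2) (V 0)))))))"

lemma sat_IncrGraphF:
  assumes "\<And>e s t. sat D e E (domF s t) \<longleftrightarrow> evl e t \<in> Dom (evl e s)"
    and "\<And>e s t. sat D e E (codF s t) \<longleftrightarrow> evl e t \<in> Cod (evl e s)"
  shows "sat D e E (IncrGraphF domF codF x) \<longleftrightarrow>
    incr_graph (coded_rel D) (wit_emb (E 0) (evl e x)) (Dom (evl e x)) (Cod (evl e x))"
  by (simp add: IncrGraphF_def assms incr_graph_def) blast

lemma arith_IncrGraphF [simp]: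
  "(\<And>s t. arith (domF s t)) \<Longrightarrow> (\<And>s t. arith (codF s t)) \<Longrightarrow> arith (IncrGraphF domF codF x)"
  by (simp add: IncrGraphF_def)

definition AboveF :: "tm \<Rightarrow> tm \<Rightarrow> fm" where
  "AboveF x u = RelF x u"

definition UnderSF :: "tm \<Rightarrow> tm \<Rightarrow> fm" where
  "UnderSF x u = StrictF u x"

lemma sat_AboveF [simp]: "sat D e E (AboveF x u) \<longleftrightarrow> evl e u \<in> above (coded_rel D) (evl e x)"
  by (simp add: AboveF_def above_def)

lemma sat_UnderSF [simp]: "sat D e E (UnderSF x u) \<longleftrightarrow> evl e u \<in> underS (coded_rel D) (evl e x)"
  by (auto simp: UnderSF_def underS_def)

lemma arith_AboveF_UnderSF [simp]: "arith (AboveF x u)" "arith (UnderSF x u)"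
  by (simp_all add: AboveF_def UnderSF_def)

definition bits_witness :: "(nat \<times> nat) set \<Rightarrow> nat set \<Rightarrow> bool" where
  "bits_witness S X \<longleftrightarrow> (\<forall>c. (c, c) \<in> S \<longrightarrow>
     c \<in> wit_bits X \<and> incr_graph S (wit_emb X c) (underS S c) (above S c) \<or>
     c \<notin> wit_bits X \<and> incr_graph S (wit_emb X c) (above S c) (underS S c))"

definition BitsWitnessF :: fm where
  "BitsWitnessF = AllN (ImpF (RelF (V 0) (V 0))
     (Disj (Conj (BitF (V 0)) (IncrGraphF UnderSF AboveF (V 0)))
           (Conj (Neg (BitF (V 0))) (IncrGraphF AboveF UnderSF (V 0)))))"

lemma sat_BitsWitnessF [simp]: "sat D e E BitsWitnessF \<longleftrightarrow> bits_witness (coded_rel D) (E 0)"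
proof -
  have "sat D e E (IncrGraphF UnderSF AboveF x) \<longleftrightarrow>
      incr_graph (coded_rel D) (wit_emb (E 0) (evl e x))
        (underS (coded_rel D) (evl e x)) (above (coded_rel D) (evl e x))"
    "sat D e E (IncrGraphF AboveF UnderSF x) \<longleftrightarrow>
      incr_graph (coded_rel D) (wit_emb (E 0) (evl e x))
        (above (coded_rel D) (evl e x)) (underS (coded_rel D) (evl e x))" for e x
    by (rule sat_IncrGraphF; simp)+
  then show ?thesis by (simp add: BitsWitnessF_def bits_witness_def)
qed

lemma arith_BitsWitnessF [simp]: "arith BitsWitnessF"
  by (simp add: BitsWitnessF_def)

definition EnumWitnessF :: fm where
  "EnumWitnessF = Conj (AllN (ExN (EnumF (V 1) (V 0))))
     (Conj (AllN (AllN (AllN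
        (ImpF (Conj (EnumF (V 2) (V 1)) (EnumF (V 2) (V 0))) (Eq (V 1) (V 0))))))
     (Conj (AllN (AllN (AllN (AllN
        (ImpF (Conj (EnumF (V 3) (V 1)) (Conj (EnumF (V 2) (V 0)) (Less (V 3) (V 2))))
          (Less (V 1) (V 0)))))))
     (Conj (AllN (AllN (ImpF (EnumF (V 1) (V 0)) (Conj (RelF (V 0) (V 0)) (Neg (BitF (V 0)))))))
        (AllN (ImpF (Conj (RelF (V 0) (V 0)) (Neg (BitF (V 0)))) (ExN (EnumF (V 0) (V 1))))))))"

lemma sat_EnumWitnessF [simp]:
  "sat D e E EnumWitnessF \<longleftrightarrow>
     enum_graph (wit_enum (E 0)) {c. (c, c) \<in> coded_rel D \<and> c \<notin> wit_bits (E 0)}"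
  by (simp add: EnumWitnessF_def enum_graph_def Range_iff set_eq_iff) blast

lemma arith_EnumWitnessF [simp]: "arith EnumWitnessF"
  by (simp add: EnumWitnessF_def)

definition bits_enum_witness :: "(nat \<times> nat) set \<Rightarrow> nat set \<Rightarrow> bool" where
  "bits_enum_witness S X \<longleftrightarrow>
     bits_witness S X \<and> enum_graph (wit_enum X) {c. (c, c) \<in> S \<and> c \<notin> wit_bits X}"

definition ReorderF :: fm where
  "ReorderF = PairsF (Conj (RelF (V 1) (V 1)) (Conj (RelF (V 0) (V 0))
     (Disj (Conj (Neg (BitF (V 1))) (BitF (V 0)))
       (Conj (RelF (V 1) (V 0)) (Disj (Conj (BitF (V 1)) (BitF (V 0)))
         (Conj (Neg (BitF (V 1))) (Neg (BitF (V 0)))))))))"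

definition PullbackF :: fm where
  "PullbackF = PairsF (ExN (ExN
     (Conj (EnumF (V 3) (V 1)) (Conj (EnumF (V 2) (V 0)) (RelF (V 1) (V 0))))))"

definition NatLeqF :: "nat \<Rightarrow> fm" where
  "NatLeqF n = PairsF (Conj (Less (V 1) (Sc (V 0))) (Less (V 0) (NumT n)))"

lemma sat_ReorderF:
  "sat D e E ReorderF \<longleftrightarrow> e 0 \<in> prod_encode ` reorder (coded_rel D) (wit_bits (E 0))"
  unfolding ReorderF_def by (rule sat_PairsF) (auto simp: reorder_def)

lemma sat_PullbackF:
  "sat D e E PullbackF \<longleftrightarrow>
     e 0 \<in> prod_encode ` (wit_enum (E 0) O coded_rel D O (wit_enum (E 0))\<inverse>)"
  unfolding PullbackF_def by (rule sat_PairsF) auto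

lemma sat_NatLeqF: "sat D e E (NatLeqF n) \<longleftrightarrow> e 0 \<in> prod_encode ` natLeq_on n"
  unfolding NatLeqF_def by (rule sat_PairsF) auto

lemma arith_relation_formulas [simp]: "arith ReorderF" "arith PullbackF" "arith (NatLeqF n)"
  by (simp_all add: ReorderF_def PullbackF_def NatLeqF_def)

section \<open>Uniformly \<open>\<Delta>\<^sup>1\<^sub>1\<close> copies of the summands\<close>

context ordinal_sum_split
begin

lemma in_A_iff_incr_graph:
  "c \<in> Field S \<Longrightarrow> c \<in> A \<longleftrightarrow> (\<exists>G. incr_graph S G (underS S c) (above S c))"
  by (simp add: in_A_iff
      incr_graph_iff_ordLeq[OF Well_order_S Order_Relation.underS_Field above_Field])

lemma in_B_iff_incr_graph:
  "c \<in> Field S \<Longrightarrow> c \<in> B \<longleftrightarrow> (\<exists>G. incr_graph S G (above S c) (underS S c))"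
  by (simp add: in_B_iff
      incr_graph_iff_ordLeq[OF Well_order_S above_Field Order_Relation.underS_Field])

lemma bits_witness_exists: obtains W where "\<And>G. bits_witness S (witness A W G)"
proof -
  have "\<exists>W. incr_graph S W (if c \<in> A then underS S c else above S c)
      (if c \<in> A then above S c else underS S c)" if c: "c \<in> Field S" for c
    using in_A_iff_incr_graph[OF c] in_B_iff_incr_graph[OF c] c Field_S by (cases "c \<in> A") auto
  then obtain W where W: "\<And>c. c \<in> Field S \<Longrightarrow> incr_graph S (W c)
      (if c \<in> A then underS S c else above S c) (if c \<in> A then above S c else underS S c)"
    by metis
  have "bits_witness S (witness A W G)" for G
    unfolding bits_witness_def Well_order_refl_iff[OF Well_order_S] witness_components
  proof (intro allI impI)
    fix c assume "c \<in> Field S"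
    then show "c \<in> A \<and> incr_graph S (W c) (underS S c) (above S c) \<or>
        c \<notin> A \<and> incr_graph S (W c) (above S c) (underS S c)"
      using W[of c] by (cases "c \<in> A") simp_all
  qed
  then show ?thesis using that by blast
qed

lemma bits_witness_wit_bits:
  assumes "bits_witness S X"
  shows "wit_bits X \<inter> Field S = A"
proof -
  have "c \<in> wit_bits X \<longleftrightarrow> c \<in> A" if c: "c \<in> Field S" for c
  proof -
    have "c \<in> wit_bits X \<and> (\<exists>G. incr_graph S G (underS S c) (above S c)) \<or>
          c \<notin> wit_bits X \<and> (\<exists>G. incr_graph S G (above S c) (underS S c))"
      using assms c unfolding bits_witness_def Well_order_refl_iff[OF Well_order_S] by blast
    then show ?thesis
      using in_A_iff_incr_graph[OF c] in_B_iff_incr_graph[OF c] disjoint by blast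
  qed
  then show ?thesis using Field_S by blast
qed

lemma bits_witness_complement:
  assumes "bits_witness S X"
  shows "{c. (c, c) \<in> S \<and> c \<notin> wit_bits X} = B"
  using bits_witness_wit_bits[OF assms] Field_S disjoint
  by (auto simp: Well_order_refl_iff[OF Well_order_S])

lemma bits_enum_witness_exists:
  assumes "infinite B"
  shows "\<exists>X. bits_enum_witness S X"
proof -
  let ?G = "range (\<lambda>i. (i, enumerate B i))"
  obtain W where bits: "bits_witness S (witness A W ?G)" using bits_witness_exists by blast
  moreover have "enum_graph ?G B" using enum_graph_iff assms by blast
  ultimately have "bits_enum_witness S (witness A W ?G)"
    unfolding bits_enum_witness_def using bits_witness_complement[OF bits] by simp
  then show ?thesis by blast
qed

lemma bits_enum_witness_wit_enum:
  assumes "bits_enum_witness S X"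
  shows "infinite B" and "wit_enum X = range (\<lambda>i. (i, enumerate B i))"
proof -
  have "enum_graph (wit_enum X) B"
    using assms bits_witness_complement unfolding bits_enum_witness_def by auto
  then show "infinite B" "wit_enum X = range (\<lambda>i. (i, enumerate B i))"
    unfolding enum_graph_iff by simp_all
qed

end

lemma sH_le_by_unique_witness:
  assumes "arith W" and "arith F"
    and sat_W: "\<And>D e E. sat D e E W \<longleftrightarrow> Wit (coded_rel D) (E 0)"
    and sat_F: "\<And>D e E. sat D e E F \<longleftrightarrow> e 0 \<in> prod_encode ` Rel (coded_rel D) (E 0)"
    and exists: "\<And>S. copy_of S r \<Longrightarrow> \<exists>X. Wit S X"
    and unique: "\<And>S X Y. copy_of S r \<Longrightarrow> Wit S X \<Longrightarrow> Wit S Y \<Longrightarrow> Rel S X = Rel S Y"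
    and copy: "\<And>S X. copy_of S r \<Longrightarrow> Wit S X \<Longrightarrow> copy_of (Rel S X) r'"
  shows "sH_le r' r"
  unfolding sH_le_def
proof (intro exI conjI allI impI)
  let ?p = "ExS (Conj W F)" and ?q = "AllS (Disj (Neg W) F)"
  show "sigma11 ?p" "pi11 ?q" using assms(1,2) by (simp_all add: sigma11_def pi11_def)
  fix S assume S: "copy_of S r"
  then obtain X where X: "Wit S X" using exists by blast
  have "dset (diag S) ?p = {n. \<exists>Y. Wit S Y \<and> n \<in> prod_encode ` Rel S Y}"
    "dset (diag S) ?q = {n. \<forall>Y. Wit S Y \<longrightarrow> n \<in> prod_encode ` Rel S Y}"
    by (simp_all add: dset_def sat_W sat_F)
  then have "dset (diag S) ?p = prod_encode ` Rel S X" "dset (diag S) ?q = prod_encode ` Rel S X"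
    using X unique[OF S _ X] by blast+
  then show "dset (diag S) ?p = dset (diag S) ?q"
    and "copy_of (prod_decode ` dset (diag S) ?p) r'"
    using copy[OF S X] by (simp_all add: image_image)
qed

lemma sH_le_finite:
  assumes "Well_order l" and "finite (Field l)"
  shows "sH_le l r"
proof (rule sH_le_by_unique_witness[where W = "Eq Zero Zero" and F = "NatLeqF (card (Field l))"
      and Wit = "\<lambda>_ _. True" and Rel = "\<lambda>_ _. natLeq_on (card (Field l))"])
  show "copy_of (natLeq_on (card (Field l))) l"
    using natLeq_on_card_ordIso[OF assms] iso_rel_iff_ordIso[OF assms(1)]
    unfolding copy_of_def by (auto simp: Field_natLeq_on lessThan_def)
qed (simp_all add: sat_NatLeqF)

lemma sH_le_first_summand:
  fixes l0 l1 :: "(nat \<times> nat) set"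
  assumes l0: "add_indecomp l0" and l1: "Well_order l1" and lt: "l1 <o l0"
  shows "sH_le l0 (osum l0 l1)"
proof (rule sH_le_by_unique_witness[where W = BitsWitnessF and F = ReorderF
      and Wit = bits_witness and Rel = "\<lambda>S X. reorder S (wit_bits X)"])
  fix S assume S: "copy_of S (osum l0 l1)"
  then obtain A B where split: "ordinal_sum_split S A B" and A: "Restr S A =o l0"
    using copy_of_osum_split[OF S l0 l1 lt] by blast
  interpret ordinal_sum_split S A B by (rule split)
  show "\<exists>X. bits_witness S X" using bits_witness_exists by blast
  have reorder_eq: "reorder S (wit_bits X) = reorder S A" if "bits_witness S X" for X
    by (rule reorder_cong) (use bits_witness_wit_bits[OF that] Field_S in blast)
  then show "reorder S (wit_bits X) = reorder S (wit_bits Y)"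
    if "bits_witness S X" "bits_witness S Y" for X Y
    using that by simp
  have "reorder S A =o l0" using reorder_ordIso A ordIso_transitive by blast
  then have "iso_rel (reorder S A) l0"
    using iso_rel_iff_ordIso l0 unfolding add_indecomp_def by blast
  then show "copy_of (reorder S (wit_bits X)) l0" if "bits_witness S X" for X
    using S unfolding reorder_eq[OF that] copy_of_def Field_reorder[OF Well_order_S] by blast
qed (simp_all add: sat_ReorderF)

lemma sH_le_infinite_second_summand:
  fixes l0 l1 :: "(nat \<times> nat) set"
  assumes l0: "add_indecomp l0" and l1: "Well_order l1" and lt: "l1 <o l0"
    and inf: "infinite (Field l1)"
  shows "sH_le l1 (osum l0 l1)"
proof (rule sH_le_by_unique_witness[where W = "Conj BitsWitnessF EnumWitnessF" and F = PullbackF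
      and Wit = bits_enum_witness and Rel = "\<lambda>S X. wit_enum X O S O (wit_enum X)\<inverse>"])
  fix S assume S: "copy_of S (osum l0 l1)"
  then obtain A B where split: "ordinal_sum_split S A B" and B: "Restr S B =o l1"
    using copy_of_osum_split[OF S l0 l1 lt] by blast
  interpret ordinal_sum_split S A B by (rule split)
  have "infinite B"
  proof
    assume "finite B"
    obtain h where "iso (Restr S B) l1 h" using B unfolding ordIso_def by blast
    then have "h ` B = Field l1" using iso_Field Field_Restr_B by metis
    then show False using inf \<open>finite B\<close> by (metis finite_imageI)
  qed
  then show "\<exists>X. bits_enum_witness S X" by (rule bits_enum_witness_exists)
  have rel_eq: "wit_enum X O S O (wit_enum X)\<inverse> = inv_image S (enumerate B)"
    if "bits_enum_witness S X" for X
    by (simp add: bits_enum_witness_wit_enum(2)[OF that] range_graph_relcomp)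
  then show "wit_enum X O S O (wit_enum X)\<inverse> = wit_enum Y O S O (wit_enum Y)\<inverse>"
    if "bits_enum_witness S X" "bits_enum_witness S Y" for X Y
    using that by simp
  have "inv_image S (enumerate B) =o l1"
    using inv_image_enumerate_B[OF \<open>infinite B\<close>] B ordIso_transitive by blast
  then have "iso_rel (inv_image S (enumerate B)) l1" using iso_rel_iff_ordIso[OF l1] by blast
  then show "copy_of (wit_enum X O S O (wit_enum X)\<inverse>) l1" if "bits_enum_witness S X" for X
    unfolding copy_of_def rel_eq[OF that] inv_image_enumerate_B(1)[OF \<open>infinite B\<close>] by simp
qed (simp_all add: sat_PullbackF bits_enum_witness_def)

theorem mainTheorem11:
  fixes l0 l1 :: "(nat \<times> nat) set"
  assumes "add_indecomp l0" and "add_indecomp l1" and "(l1, l0) \<in> ordLess"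
  shows "sH_le l0 (osum l0 l1) \<and> sH_le l1 (osum l0 l1)"
proof -
  have l1: "Well_order l1" using assms(2) unfolding add_indecomp_def by blast
  have "sH_le l1 (osum l0 l1)"
  proof (cases "finite (Field l1)")
    case True
    then show ?thesis by (rule sH_le_finite[OF l1])
  next
    case False
    then show ?thesis by (rule sH_le_infinite_second_summand[OF assms(1) l1 assms(3)])
  qed
  then show ?thesis using sH_le_first_summand[OF assms(1) l1 assms(3)] by blast
qed

end
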